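(* Let $p\in\mathbb N$ and let $u_j(t)$, $j\in\mathbb Z$, be a solution (on an interval containing $t=0$) of the lattice $$u'_j=u_j(u_{j+p}+\cdots+u_{j+1}-u_{j-1}-\cdots-u_{j-p})$$ satisfying the boundary conditions $u_j=0$ for $j\le 0$ and such that $u_j\ne 0$ for $j>0$. Then it admits the representation $$u_1=f'_1/f_1,\qquad u_j=f'_j/f_j-f'_{j-1}/f_{j-1},\quad j>1,$$ where the functions $f_j$, $j\ge -p$, satisfy the bilinear lattice equation $$f_{j-1}f'_j-f'_{j-1}f_j=f_{j-p-1}f_{j+p},\qquad j=1,2,\dots,$$ with $f_{-p}=\dots=f_0=1$ and $f_1(0)=\dots=f_p(0)=1$.
   Context: $f'=df/dt$. *)

theory Defs
  imports "HOL-Analysis.Analysis"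
begin

end

theory Submission
  imports Defs
begin

(* With the partial sums U_j = u_1 + ... + u_j (so U_j = 0 for j <= 0) the lattice reads
   u_j'/u_j = U_{j+p} - U_{j-1} - U_j + U_{j-p-1}.  If the f_j have logarithmic derivatives
   f_j'/f_j = U_j, then u_j = U_j - U_{j-1} is the claimed representation, and the bilinear
   equation becomes f_{j+p} f_{j-p-1} = f_{j-1} f_j u_j.  So take f_j = 1 for j <= 0,
   f_j = exp (integral of U_j from 0) for 1 <= j <= p, and use the bilinear equation as a
   recursion for j > p: by the lattice equation the logarithmic derivatives on its right-hand
   side add up to U_{j+p}, so f'/f = U propagates by strong induction. *)

lemma open_interval_eq_einterval:
  fixes I :: "real set"
  assumes "open I" "is_interval I"
  shows "I = einterval (Inf (ereal ` I)) (Sup (ereal ` I))"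
proof (intro set_eqI iffI)
  fix x assume "x \<in> I"
  then obtain e where e: "e > 0" "ball x e \<subseteq> I"
    using assms(1) open_contains_ball by blast
  then have "x - e/2 \<in> I" "x + e/2 \<in> I"
    by (auto simp: dist_real_def subset_iff)
  then have "Inf (ereal ` I) \<le> ereal (x - e/2)" "ereal (x + e/2) \<le> Sup (ereal ` I)"
    by (auto intro: Inf_lower Sup_upper)
  moreover have "ereal (x - e/2) < ereal x" "ereal x < ereal (x + e/2)"
    using e by auto
  ultimately show "x \<in> einterval (Inf (ereal ` I)) (Sup (ereal ` I))"
    unfolding einterval_iff by (meson order_le_less_trans order_less_le_trans)
next
  fix x assume "x \<in> einterval (Inf (ereal ` I)) (Sup (ereal ` I))"
  then obtain y z where "y \<in> I" "z \<in> I" "y < x" "x < z"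
    by (auto simp: einterval_iff Inf_less_iff less_Sup_iff)
  then show "x \<in> I"
    using assms(2) unfolding is_interval_1 by (meson less_imp_le)
qed

lemma antiderivative_open_interval:
  fixes I :: "real set" and g :: "real \<Rightarrow> real"
  assumes "open I" "is_interval I" "a \<in> I" "\<And>x. x \<in> I \<Longrightarrow> isCont g x"
  obtains G where "G a = 0" "\<And>x. x \<in> I \<Longrightarrow> (G has_real_derivative g x) (at x)"
proof -
  define l r where "l = Inf (ereal ` I)" and "r = Sup (ereal ` I)"
  have I_eq: "x \<in> I \<longleftrightarrow> l < ereal x \<and> ereal x < r" for x
    using open_interval_eq_einterval[OF assms(1,2)] unfolding l_def r_def
    by (metis einterval_iff)
  have "l < r"
    using assms(3) I_eq by (meson order_less_trans)
  then obtain G where G: "\<And>x. l < ereal x \<Longrightarrow> ereal x < r \<Longrightarrow> (G has_vector_derivative g x) (at x)"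
    using einterval_antiderivative[of l r g] assms(4) I_eq by metis
  show ?thesis
  proof
    fix x assume "x \<in> I"
    then show "((\<lambda>x. G x - G a) has_real_derivative g x) (at x)"
      using G I_eq by (auto intro!: derivative_eq_intros simp: has_real_derivative_iff_has_vector_derivative)
  qed simp
qed

lemma exists_exp_antiderivatives:
  fixes I :: "real set" and U :: "'i \<Rightarrow> real \<Rightarrow> real"
  assumes "open I" "is_interval I" "0 \<in> I" "\<And>i x. x \<in> I \<Longrightarrow> isCont (U i) x"
  obtains g where "\<And>i. g i 0 = 1" "\<And>i x. g i x \<noteq> 0"
    and "\<And>i x. x \<in> I \<Longrightarrow> (g i has_real_derivative U i x * g i x) (at x)"
proof -
  have "\<exists>G. G 0 = 0 \<and> (\<forall>x\<in>I. (G has_real_derivative U i x) (at x))" for i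
    by (rule antiderivative_open_interval[OF assms(1-3), of "U i"]) (auto intro: assms(4))
  then obtain G where "\<And>i. G i 0 = 0" "\<And>i x. x \<in> I \<Longrightarrow> (G i has_real_derivative U i x) (at x)"
    by metis
  then show ?thesis
    by (intro that[of "\<lambda>i x. exp (G i x)"]) (auto intro!: derivative_eq_intros simp: mult.commute)
qed

definition partial_sum :: "(int \<Rightarrow> 'a::comm_monoid_add) \<Rightarrow> int \<Rightarrow> 'a" where
  "partial_sum u i = (\<Sum>k=1..i. u k)"

lemma sum_int_atLeastAtMost_Suc:
  "(\<Sum>k=1..int (Suc m). g k) = (\<Sum>k=1..int m. g k) + (g (int m + 1) :: 'a::comm_monoid_add)"
proof -
  have "{1..int (Suc m)} = insert (int m + 1) {1..int m}" by auto
  then show ?thesis by (simp add: add.commute)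
qed

lemma partial_sum_diff:
  fixes u :: "int \<Rightarrow> 'a::ab_group_add"
  assumes "\<And>k. k \<le> 0 \<Longrightarrow> u k = 0"
  shows "partial_sum u i - partial_sum u (i - 1) = u i"
proof (cases "i \<ge> 1")
  case True
  then have "{1..i} = insert i {1..i - 1}" by auto
  then show ?thesis by (simp add: partial_sum_def)
next
  case False
  then show ?thesis using assms by (simp add: partial_sum_def)
qed

lemma sum_upper_neighbours_eq_partial_sum:
  fixes u :: "int \<Rightarrow> 'a::ab_group_add"
  assumes "\<And>k. k \<le> 0 \<Longrightarrow> u k = 0"
  shows "(\<Sum>k=1..int m. u (j + k)) = partial_sum u (j + int m) - partial_sum u j"
proof (induction m)
  case (Suc m)
  then show ?case
    unfolding sum_int_atLeastAtMost_Suc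
    using partial_sum_diff[of u "j + int m + 1", OF assms] by (simp add: algebra_simps)
qed simp

lemma sum_lower_neighbours_eq_partial_sum:
  fixes u :: "int \<Rightarrow> 'a::ab_group_add"
  assumes "\<And>k. k \<le> 0 \<Longrightarrow> u k = 0"
  shows "(\<Sum>k=1..int m. u (j - k)) = partial_sum u (j - 1) - partial_sum u (j - int m - 1)"
proof (induction m)
  case (Suc m)
  then show ?case
    unfolding sum_int_atLeastAtMost_Suc
    using partial_sum_diff[of u "j - int m - 1", OF assms] by (simp add: algebra_simps)
qed simp

lemma sum_neighbours_diff_eq_partial_sums:
  fixes u :: "int \<Rightarrow> 'a::ab_group_add"
  assumes "\<And>k. k \<le> 0 \<Longrightarrow> u k = 0"
  shows "(\<Sum>k=1..int m. u (j + k)) - (\<Sum>k=1..int m. u (j - k)) =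
    partial_sum u (j + int m) - partial_sum u (j - 1) - partial_sum u j + partial_sum u (j - int m - 1)"
  by (simp add: sum_upper_neighbours_eq_partial_sum[where u = u, OF assms]
      sum_lower_neighbours_eq_partial_sum[where u = u, OF assms])

(* For p = 0 the recursion would not terminate; the guard makes tau_seq 0 b u = b. *)
function tau_seq :: "nat \<Rightarrow> (int \<Rightarrow> 'a::field) \<Rightarrow> (int \<Rightarrow> 'a) \<Rightarrow> int \<Rightarrow> 'a" where
  "tau_seq p b u j =
    (if j \<le> int p \<or> p = 0 then b j
     else tau_seq p b u (j - int p - 1) * tau_seq p b u (j - int p) * u (j - int p)
            / tau_seq p b u (j - 2 * int p - 1))"
  by auto
termination
  by (relation "Wellfounded.measure (\<lambda>(p, b, u, j). nat j)") auto

declare tau_seq.simps [simp del]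

lemma tau_seq_initial: "j \<le> int p \<Longrightarrow> tau_seq p b u j = b j"
  by (simp add: tau_seq.simps)

lemma tau_seq_step:
  assumes "p \<ge> 1" "i \<ge> 1"
  shows "tau_seq p b u (i + int p) =
    tau_seq p b u (i - 1) * tau_seq p b u i * u i / tau_seq p b u (i - int p - 1)"
  using assms by (subst tau_seq.simps) (simp add: algebra_simps)

lemma has_real_derivative_mult_divide_logarithmic:
  assumes "(a has_real_derivative \<alpha> * a t) (at t)" "(b has_real_derivative \<beta> * b t) (at t)"
    and "(w has_real_derivative (\<delta> - \<alpha> - \<beta> + \<gamma>) * w t) (at t)"
    and "(c has_real_derivative \<gamma> * c t) (at t)" "c t \<noteq> 0"
  shows "((\<lambda>s. a s * b s * w s / c s) has_real_derivative \<delta> * (a t * b t * w t / c t)) (at t)"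
  using DERIV_divide[OF DERIV_mult[OF DERIV_mult[OF assms(1,2)] assms(3)] assms(4,5)]
  by (rule DERIV_cong) (simp add: assms(5) field_simps)

locale tau_recursion_data =
  fixes p :: nat and I :: "real set" and b u U :: "int \<Rightarrow> real \<Rightarrow> real"
  assumes p_pos: "p \<ge> 1"
    and initial: "\<And>j t. - int p \<le> j \<Longrightarrow> j \<le> int p \<Longrightarrow> t \<in> I \<Longrightarrow>
                     b j t \<noteq> 0 \<and> (b j has_real_derivative U j t * b j t) (at t)"
    and increment: "\<And>i t. i \<ge> 1 \<Longrightarrow> t \<in> I \<Longrightarrow> U i t - U (i - 1) t = u i t"
    and lattice: "\<And>i t. i \<ge> 1 \<Longrightarrow> t \<in> I \<Longrightarrow> (u i has_real_derivative
                     (U (i + int p) t - U (i - 1) t - U i t + U (i - int p - 1) t) * u i t) (at t)"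
    and nonzero: "\<And>i t. i \<ge> 1 \<Longrightarrow> t \<in> I \<Longrightarrow> u i t \<noteq> 0"
begin

definition tau :: "int \<Rightarrow> real \<Rightarrow> real" where
  "tau j t = tau_seq p (\<lambda>i. b i t) (\<lambda>i. u i t) j"

lemma tau_initial: "j \<le> int p \<Longrightarrow> tau j = b j"
  by (auto simp: tau_def tau_seq_initial)

lemma tau_step: "i \<ge> 1 \<Longrightarrow> tau (i + int p) t = tau (i - 1) t * tau i t * u i t / tau (i - int p - 1) t"
  unfolding tau_def by (rule tau_seq_step[OF p_pos])

lemma tau_logarithmic_derivative:
  assumes "- int p \<le> j" "t \<in> I"
  shows "tau j t \<noteq> 0 \<and> (tau j has_real_derivative U j t * tau j t) (at t)"
  using assms
proof (induction j arbitrary: t rule: measure_induct_rule[where f = "\<lambda>j. nat (j + int p)"])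
  case (less j)
  show ?case
  proof (cases "j \<le> int p")
    case True
    then show ?thesis
      using initial less.prems by (simp add: tau_initial)
  next
    case False
    define i where "i = j - int p"
    then have "i \<ge> 1" "j = i + int p"
      using False by simp_all
    have IH: "tau k t \<noteq> 0" "(tau k has_real_derivative U k t * tau k t) (at t)"
      if "- int p \<le> k" "k < j" for k
      using less.IH that less.prems by simp_all
    have "- int p \<le> i - 1" "i - 1 < j" "- int p \<le> i" "i < j"
      and "- int p \<le> i - int p - 1" "i - int p - 1 < j"
      using \<open>i \<ge> 1\<close> p_pos i_def by auto
    note IH_instances = IH[OF this(1,2)] IH[OF this(3,4)] IH[OF this(5,6)]
    have tau_j: "tau (i + int p) = (\<lambda>t. tau (i - 1) t * tau i t * u i t / tau (i - int p - 1) t)"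
      using tau_step[OF \<open>i \<ge> 1\<close>] by auto
    show ?thesis
      unfolding \<open>j = i + int p\<close> tau_j
      using has_real_derivative_mult_divide_logarithmic[OF IH_instances(2,4)
          lattice[OF \<open>i \<ge> 1\<close> less.prems(2)] IH_instances(6,5)]
        IH_instances nonzero[OF \<open>i \<ge> 1\<close> less.prems(2)] by simp
  qed
qed

lemma deriv_tau: "- int p \<le> j \<Longrightarrow> t \<in> I \<Longrightarrow> deriv (tau j) t = U j t * tau j t"
  using tau_logarithmic_derivative DERIV_imp_deriv by blast

lemma u_eq_logarithmic_derivative_diff:
  assumes "i \<ge> 1" "t \<in> I"
  shows "u i t = deriv (tau i) t / tau i t - deriv (tau (i - 1)) t / tau (i - 1) t"
  using assms increment[OF assms] deriv_tau[of i t] deriv_tau[of "i - 1" t]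
    tau_logarithmic_derivative[of i t] tau_logarithmic_derivative[of "i - 1" t]
  by simp

lemma tau_bilinear:
  assumes "i \<ge> 1" "t \<in> I"
  shows "tau (i - 1) t * deriv (tau i) t - deriv (tau (i - 1)) t * tau i t
    = tau (i - int p - 1) t * tau (i + int p) t"
proof -
  have "tau (i - int p - 1) t * tau (i + int p) t = tau (i - 1) t * tau i t * u i t"
    using tau_step[OF assms(1), of t] tau_logarithmic_derivative[of "i - int p - 1" t] assms
    by simp
  also have "\<dots> = tau (i - 1) t * deriv (tau i) t - deriv (tau (i - 1)) t * tau i t"
    using deriv_tau[of i t] deriv_tau[of "i - 1" t] assms
    by (simp add: increment[OF assms, symmetric] algebra_simps)
  finally show ?thesis ..
qed

end

lemma tau_recursion_data_partial_sums:
  fixes p :: nat and I :: "real set" and u g :: "int \<Rightarrow> real \<Rightarrow> real"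
  assumes "p \<ge> 1"
    and lattice: "\<forall>j. \<forall>t\<in>I. ((u j) has_real_derivative
            (u j t * ((\<Sum>k=1..int p. u (j + k) t) - (\<Sum>k=1..int p. u (j - k) t)))) (at t)"
    and bc_zero: "\<forall>j\<le>0. \<forall>t\<in>I. u j t = 0"
    and bc_nonzero: "\<forall>j>0. \<forall>t\<in>I. u j t \<noteq> 0"
    and g_nonzero: "\<And>i t. g i t \<noteq> 0"
    and g_log_deriv: "\<And>i t. t \<in> I \<Longrightarrow>
          (g i has_real_derivative partial_sum (\<lambda>k. u k t) i * g i t) (at t)"
  shows "tau_recursion_data p I (\<lambda>j. if j \<le> 0 then (\<lambda>_. 1) else g j) u
           (\<lambda>i t. partial_sum (\<lambda>k. u k t) i)"
proof
  fix i j :: int and t assume "t \<in> I"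
  then have u_vanishes: "\<And>k. k \<le> 0 \<Longrightarrow> u k t = 0"
    using bc_zero by simp
  have "partial_sum (\<lambda>k. u k t) j = 0" if "j \<le> 0"
    using that by (simp add: partial_sum_def)
  then show "(if j \<le> 0 then \<lambda>_. 1 else g j) t \<noteq> 0 \<and>
      ((if j \<le> 0 then \<lambda>_. 1 else g j) has_real_derivative
        partial_sum (\<lambda>k. u k t) j * (if j \<le> 0 then \<lambda>_. 1 else g j) t) (at t)"
    using g_nonzero g_log_deriv[OF \<open>t \<in> I\<close>] by (cases "j \<le> 0") simp_all
  show "partial_sum (\<lambda>k. u k t) i - partial_sum (\<lambda>k. u k t) (i - 1) = u i t"
    by (rule partial_sum_diff) (rule u_vanishes)
  have "(\<Sum>k=1..int p. u (i + k) t) - (\<Sum>k=1..int p. u (i - k) t)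
      = partial_sum (\<lambda>k. u k t) (i + int p) - partial_sum (\<lambda>k. u k t) (i - 1)
        - partial_sum (\<lambda>k. u k t) i + partial_sum (\<lambda>k. u k t) (i - int p - 1)"
    by (rule sum_neighbours_diff_eq_partial_sums[where u = "\<lambda>k. u k t"]) (rule u_vanishes)
  then show "(u i has_real_derivative
      (partial_sum (\<lambda>k. u k t) (i + int p) - partial_sum (\<lambda>k. u k t) (i - 1)
        - partial_sum (\<lambda>k. u k t) i + partial_sum (\<lambda>k. u k t) (i - int p - 1)) * u i t) (at t)"
    using lattice \<open>t \<in> I\<close> by (metis mult.commute)
qed (use assms in auto)

theorem proposition2:
  fixes p :: nat and I :: "real set" and u :: "int \<Rightarrow> real \<Rightarrow> real"
  assumes p_pos: "p \<ge> 1"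
    and I_open: "open I" and I_int: "is_interval I" and I_0: "0 \<in> I"
    and lattice: "\<forall>j. \<forall>t\<in>I. ((u j) has_real_derivative
            (u j t * ((\<Sum>k=1..int p. u (j + k) t) - (\<Sum>k=1..int p. u (j - k) t)))) (at t)"
    and bc_zero: "\<forall>j\<le>0. \<forall>t\<in>I. u j t = 0"
    and bc_nonzero: "\<forall>j>0. \<forall>t\<in>I. u j t \<noteq> 0"
  shows "\<exists>f :: int \<Rightarrow> real \<Rightarrow> real.
      (\<forall>j\<ge>- int p. \<forall>t\<in>I. f j differentiable (at t) \<and> f j t \<noteq> 0)
    \<and> (\<forall>t\<in>I. u 1 t = deriv (f 1) t / f 1 t)
    \<and> (\<forall>j>1. \<forall>t\<in>I. u j t = deriv (f j) t / f j t - deriv (f (j - 1)) t / f (j - 1) t)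
    \<and> (\<forall>j\<ge>1. \<forall>t\<in>I. f (j - 1) t * deriv (f j) t - deriv (f (j - 1)) t * f j t
                        = f (j - int p - 1) t * f (j + int p) t)
    \<and> (\<forall>j. - int p \<le> j \<and> j \<le> 0 \<longrightarrow> (\<forall>t\<in>I. f j t = 1))
    \<and> (\<forall>j. 1 \<le> j \<and> j \<le> int p \<longrightarrow> f j 0 = 1)"
proof -
  define U where "U = (\<lambda>i t. partial_sum (\<lambda>k. u k t) i)"
  have "isCont (u k) t" if "t \<in> I" for k t
    using lattice that DERIV_isCont by blast
  then have "isCont (U i) t" if "t \<in> I" for i t
    using that unfolding U_def partial_sum_def by (auto intro!: continuous_intros)
  then obtain g where g: "\<And>i. g i 0 = 1" "\<And>i t. g i t \<noteq> 0"
    "\<And>i t. t \<in> I \<Longrightarrow> (g i has_real_derivative U i t * g i t) (at t)"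
    using exists_exp_antiderivatives[OF I_open I_int I_0] by metis
  define b where "b j = (if j \<le> 0 then (\<lambda>_. 1) else g j)" for j :: int
  interpret tau_recursion_data p I b u U
    unfolding b_def U_def
    by (rule tau_recursion_data_partial_sums[OF assms(1,5-7) g(2) g(3)[unfolded U_def]])
  show ?thesis
  proof (intro exI[of _ tau] conjI allI impI ballI)
    fix j t assume "j \<ge> - int p" "t \<in> I"
    then show "tau j differentiable (at t)" "tau j t \<noteq> 0"
      using tau_logarithmic_derivative by (auto simp: real_differentiable_def)
  next
    fix t assume "t \<in> I"
    moreover have "U 0 t = 0"
      by (simp add: U_def partial_sum_def)
    ultimately show "u 1 t = deriv (tau 1) t / tau 1 t"
      using u_eq_logarithmic_derivative_diff[of 1 t] deriv_tau[of 0 t] by simp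
  qed (auto simp: u_eq_logarithmic_derivative_diff tau_bilinear tau_initial b_def g(1))
qed

end
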